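(* If a sequent without stoups (i.e. all of whose stoups are empty) is derivable in $\mathcal{M}_{2018}$, then it is also derivable in $\mathcal{F}_{2018}$.
   Context: Formulae are built from a countable set of variables and $\mathbf1$ by $\backslash,/,\cdot,\wedge,\vee$ and the unary $\langle\rangle$, $[]^{-1}$, $!$. A stoup is a finite multiset of formulae ($\varnothing$ empty); a tree term is a formula or $[\Xi]$; a meta-formula is $\zeta;\Gamma$ ($\zeta$ a stoup, $\Gamma$ a finite sequence of tree terms, empty $\Lambda$), $\varnothing;\Gamma$ written $\Gamma$; comma is concatenation / multiset union; sequents $\Xi\to C$; $\Xi(\Theta)$ designates an occurrence of a meta-formula $\Theta$ which is $\Xi$ itself or the content of a bracket $[\Theta]$ at any depth. Rules of $\mathcal{M}_{2018}$ (Morrill's calculus; no cut rule): axioms $A\to A$, $\Lambda\to\mathbf1$; ($/L$) from $\zeta_1;\Gamma\to B$ and $\Xi(\zeta_2;\Delta_1,C,\Delta_2)\to D$ infer $\Xi(\zeta_1,\zeta_2;\Delta_1,C/B,\Gamma,\Delta_2)\to D$; ($/R$) from $\zeta;\Gamma,B\to C$ infer $\zeta;\Gamma\to C/B$; ($\backslash L$) from $\zeta_1;\Gamma\to A$ and $\Xi(\zeta_2;\Delta_1,C,\Delta_2)\to D$ infer $\Xi(\zeta_1,\zeta_2;\Delta_1,\Gamma,A\backslash C,\Delta_2)\to D$; ($\backslash R$) from $\zeta;A,\Gamma\to C$ infer $\zeta;\Gamma\to A\backslash C$; ($\cdot L$) from $\Xi(\zeta;\Delta_1,A,B,\Delta_2)\to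 D$ infer $\Xi(\zeta;\Delta_1,A\cdot B,\Delta_2)\to D$; ($\cdot R$) from $\zeta_1;\Delta\to A$, $\zeta_2;\Gamma\to B$ infer $\zeta_1,\zeta_2;\Delta,\Gamma\to A\cdot B$; ($\mathbf1L$) from $\Xi(\zeta;\Delta_1,\Delta_2)\to A$ infer $\Xi(\zeta;\Delta_1,\mathbf1,\Delta_2)\to A$; ($\vee L$) from $\Xi(\zeta;\Delta_1,A_1,\Delta_2)\to C$ and $\Xi(\zeta;\Delta_1,A_2,\Delta_2)\to C$ infer $\Xi(\zeta;\Delta_1,A_1\vee A_2,\Delta_2)\to C$; ($\vee R_i$) from $\Xi\to A_i$ infer $\Xi\to A_1\vee A_2$; ($\wedge L_i$) from $\Xi(\zeta;\Delta_1,A_i,\Delta_2)\to C$ infer $\Xi(\zeta;\Delta_1,A_1\wedge A_2,\Delta_2)\to C$; ($\wedge R$) from $\Xi\to A_1$ and $\Xi\to A_2$ infer $\Xi\to A_1\wedge A_2$; ($[]^{-1}L$) from $\Xi(\zeta;\Delta_1,A,\Delta_2)\to B$ infer $\Xi(\zeta;\Delta_1,[[]^{-1}A],\Delta_2)\to B$; ($[]^{-1}R$) from $[\Xi]\to A$ infer $\Xi\to[]^{-1}A$; ($\langle\rangle L$) from $\Xi(\zeta;\Delta_1,[A],\Delta_2)\to B$ infer $\Xi(\zeta;\Delta_1,\langle\rangle A,\Delta_2)\to B$; ($\langle\rangle R$) from $\Xi\to A$ infer $[\Xi]\to\langle\rangle A$; ($!L$) from $\Xi(\zeta,A;\Gamma_1,\Gamma_2)\to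 B$ infer $\Xi(\zeta;\Gamma_1,!A,\Gamma_2)\to B$; ($!P$) from $\Xi(\zeta;\Gamma_1,A,\Gamma_2)\to B$ infer $\Xi(\zeta,A;\Gamma_1,\Gamma_2)\to B$; ($!R$) from $!A\to B$ infer $!A\to!B$; ($!C$) from $\Xi(\zeta,A;\Gamma_1,[A;\Gamma_2],\Gamma_3)\to B$ infer $\Xi(\zeta,A;\Gamma_1,[[\Gamma_2]],\Gamma_3)\to B$. Stoup-free calculus $\mathcal{F}_{2018}$: meta-formulae are finite sequences of tree terms; rules are the stoup-free versions of the rules above other than $!L,!P,!R,!C$ (drop all stoups), together with ($!L$) from $\Xi(\Delta_1,A,\Delta_2)\to C$ infer $\Xi(\Delta_1,!A,\Delta_2)\to C$; ($!P_1$) from $\Xi(\Delta_1,!A,\Phi,\Delta_2)\to C$ infer $\Xi(\Delta_1,\Phi,!A,\Delta_2)\to C$; ($!P_2$) the converse; ($!R$) from $!A\to B$ infer $!A\to!B$; ($!C$) from $\Xi(!A,\Gamma_1,[!A,\Gamma_2],\Gamma_3)\to C$ infer $\Xi(!A,\Gamma_1,[[\Gamma_2]],\Gamma_3)\to C$; and the cut rule: from $\Pi\to A$ and $\Xi(\Gamma_1,A,\Gamma_2)\to C$ infer $\Xi(\Gamma_1,\Pi,\Gamma_2)\to C$. *)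

theory Defs
  imports Main "HOL-Library.Multiset"
begin

datatype form =
    Var nat
  | One
  | Under form form      (* Under A C  =  A \ C *)
  | Over form form       (* Over C B   =  C / B *)
  | Prod form form
  | With form form
  | Plus form form
  | Diam form
  | BoxInv form
  | Bang form

(* tree terms: a formula or a bracketed meta-formula;
   meta-formulae: a stoup (multiset) and a sequence of tree terms *)
datatype tt = F form | Br mf
     and mf = MF "form multiset" "tt list"

(* contexts Xi(_): the hole is the whole meta-formula, or the content of a
   bracket at any depth; each enclosing level has its own stoup *)
datatype ctx = Hole | CBr "form multiset" "tt list" ctx "tt list"

fun fill :: "ctx \<Rightarrow> mf \<Rightarrow> mf" where
  "fill Hole T = T"
| "fill (CBr z G1 c G2) T = MF z (G1 @ [Br (fill c T)] @ G2)"

inductive derivM :: "mf \<Rightarrow> form \<Rightarrow> bool" where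
  M_ax: "derivM (MF {#} [F A]) A"
| M_one: "derivM (MF {#} []) One"
| M_OverL: "derivM (MF z1 G) B \<Longrightarrow> derivM (fill X (MF z2 (D1 @ [F C] @ D2))) D \<Longrightarrow>
    derivM (fill X (MF (z1 + z2) (D1 @ [F (Over C B)] @ G @ D2))) D"
| M_OverR: "derivM (MF z (G @ [F B])) C \<Longrightarrow> derivM (MF z G) (Over C B)"
| M_UnderL: "derivM (MF z1 G) A \<Longrightarrow> derivM (fill X (MF z2 (D1 @ [F C] @ D2))) D \<Longrightarrow>
    derivM (fill X (MF (z1 + z2) (D1 @ G @ [F (Under A C)] @ D2))) D"
| M_UnderR: "derivM (MF z ([F A] @ G)) C \<Longrightarrow> derivM (MF z G) (Under A C)"
| M_ProdL: "derivM (fill X (MF z (D1 @ [F A, F B] @ D2))) D \<Longrightarrow>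
    derivM (fill X (MF z (D1 @ [F (Prod A B)] @ D2))) D"
| M_ProdR: "derivM (MF z1 D) A \<Longrightarrow> derivM (MF z2 G) B \<Longrightarrow>
    derivM (MF (z1 + z2) (D @ G)) (Prod A B)"
| M_OneL: "derivM (fill X (MF z (D1 @ D2))) A \<Longrightarrow>
    derivM (fill X (MF z (D1 @ [F One] @ D2))) A"
| M_PlusL: "derivM (fill X (MF z (D1 @ [F A1] @ D2))) C \<Longrightarrow>
    derivM (fill X (MF z (D1 @ [F A2] @ D2))) C \<Longrightarrow>
    derivM (fill X (MF z (D1 @ [F (Plus A1 A2)] @ D2))) C"
| M_PlusR1: "derivM Xi A1 \<Longrightarrow> derivM Xi (Plus A1 A2)"
| M_PlusR2: "derivM Xi A2 \<Longrightarrow> derivM Xi (Plus A1 A2)"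
| M_WithL1: "derivM (fill X (MF z (D1 @ [F A1] @ D2))) C \<Longrightarrow>
    derivM (fill X (MF z (D1 @ [F (With A1 A2)] @ D2))) C"
| M_WithL2: "derivM (fill X (MF z (D1 @ [F A2] @ D2))) C \<Longrightarrow>
    derivM (fill X (MF z (D1 @ [F (With A1 A2)] @ D2))) C"
| M_WithR: "derivM Xi A1 \<Longrightarrow> derivM Xi A2 \<Longrightarrow> derivM Xi (With A1 A2)"
| M_BoxInvL: "derivM (fill X (MF z (D1 @ [F A] @ D2))) B \<Longrightarrow>
    derivM (fill X (MF z (D1 @ [Br (MF {#} [F (BoxInv A)])] @ D2))) B"
| M_BoxInvR: "derivM (MF {#} [Br Xi]) A \<Longrightarrow> derivM Xi (BoxInv A)"
| M_DiamL: "derivM (fill X (MF z (D1 @ [Br (MF {#} [F A])] @ D2))) B \<Longrightarrow>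
    derivM (fill X (MF z (D1 @ [F (Diam A)] @ D2))) B"
| M_DiamR: "derivM Xi A \<Longrightarrow> derivM (MF {#} [Br Xi]) (Diam A)"
| M_BangL: "derivM (fill X (MF (z + {#A#}) (G1 @ G2))) B \<Longrightarrow>
    derivM (fill X (MF z (G1 @ [F (Bang A)] @ G2))) B"
| M_BangP: "derivM (fill X (MF z (G1 @ [F A] @ G2))) B \<Longrightarrow>
    derivM (fill X (MF (z + {#A#}) (G1 @ G2))) B"
| M_BangR: "derivM (MF {#} [F (Bang A)]) B \<Longrightarrow> derivM (MF {#} [F (Bang A)]) (Bang B)"
| M_BangC: "derivM (fill X (MF (z + {#A#}) (G1 @ [Br (MF {#A#} G2)] @ G3))) B \<Longrightarrow>
    derivM (fill X (MF (z + {#A#}) (G1 @ [Br (MF {#} [Br (MF {#} G2)])] @ G3))) B"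

fun stoupfree_tt :: "tt \<Rightarrow> bool" and stoupfree :: "mf \<Rightarrow> bool" where
  "stoupfree_tt (F A) = True"
| "stoupfree_tt (Br m) = stoupfree m"
| "stoupfree (MF z G) = (z = {#} \<and> (\<forall>t\<in>set G. stoupfree_tt t))"

datatype ftt = FF form | FBr "ftt list"

datatype fctx = FHole | FCBr "ftt list" fctx "ftt list"

fun ffill :: "fctx \<Rightarrow> ftt list \<Rightarrow> ftt list" where
  "ffill FHole T = T"
| "ffill (FCBr G1 c G2) T = G1 @ [FBr (ffill c T)] @ G2"

inductive derivF :: "ftt list \<Rightarrow> form \<Rightarrow> bool" where
  F_ax: "derivF [FF A] A"
| F_one: "derivF [] One"
| F_OverL: "derivF G B \<Longrightarrow> derivF (ffill X (D1 @ [FF C] @ D2)) D \<Longrightarrow>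
    derivF (ffill X (D1 @ [FF (Over C B)] @ G @ D2)) D"
| F_OverR: "derivF (G @ [FF B]) C \<Longrightarrow> derivF G (Over C B)"
| F_UnderL: "derivF G A \<Longrightarrow> derivF (ffill X (D1 @ [FF C] @ D2)) D \<Longrightarrow>
    derivF (ffill X (D1 @ G @ [FF (Under A C)] @ D2)) D"
| F_UnderR: "derivF ([FF A] @ G) C \<Longrightarrow> derivF G (Under A C)"
| F_ProdL: "derivF (ffill X (D1 @ [FF A, FF B] @ D2)) D \<Longrightarrow>
    derivF (ffill X (D1 @ [FF (Prod A B)] @ D2)) D"
| F_ProdR: "derivF D A \<Longrightarrow> derivF G B \<Longrightarrow> derivF (D @ G) (Prod A B)"
| F_OneL: "derivF (ffill X (D1 @ D2)) A \<Longrightarrow> derivF (ffill X (D1 @ [FF One] @ D2)) A"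
| F_PlusL: "derivF (ffill X (D1 @ [FF A1] @ D2)) C \<Longrightarrow>
    derivF (ffill X (D1 @ [FF A2] @ D2)) C \<Longrightarrow>
    derivF (ffill X (D1 @ [FF (Plus A1 A2)] @ D2)) C"
| F_PlusR1: "derivF Xi A1 \<Longrightarrow> derivF Xi (Plus A1 A2)"
| F_PlusR2: "derivF Xi A2 \<Longrightarrow> derivF Xi (Plus A1 A2)"
| F_WithL1: "derivF (ffill X (D1 @ [FF A1] @ D2)) C \<Longrightarrow>
    derivF (ffill X (D1 @ [FF (With A1 A2)] @ D2)) C"
| F_WithL2: "derivF (ffill X (D1 @ [FF A2] @ D2)) C \<Longrightarrow>
    derivF (ffill X (D1 @ [FF (With A1 A2)] @ D2)) C"
| F_WithR: "derivF Xi A1 \<Longrightarrow> derivF Xi A2 \<Longrightarrow> derivF Xi (With A1 A2)"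
| F_BoxInvL: "derivF (ffill X (D1 @ [FF A] @ D2)) B \<Longrightarrow>
    derivF (ffill X (D1 @ [FBr [FF (BoxInv A)]] @ D2)) B"
| F_BoxInvR: "derivF [FBr Xi] A \<Longrightarrow> derivF Xi (BoxInv A)"
| F_DiamL: "derivF (ffill X (D1 @ [FBr [FF A]] @ D2)) B \<Longrightarrow>
    derivF (ffill X (D1 @ [FF (Diam A)] @ D2)) B"
| F_DiamR: "derivF Xi A \<Longrightarrow> derivF [FBr Xi] (Diam A)"
| F_BangL: "derivF (ffill X (D1 @ [FF A] @ D2)) C \<Longrightarrow>
    derivF (ffill X (D1 @ [FF (Bang A)] @ D2)) C"
| F_BangP1: "derivF (ffill X (D1 @ [FF (Bang A)] @ Phi @ D2)) C \<Longrightarrow>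
    derivF (ffill X (D1 @ Phi @ [FF (Bang A)] @ D2)) C"
| F_BangP2: "derivF (ffill X (D1 @ Phi @ [FF (Bang A)] @ D2)) C \<Longrightarrow>
    derivF (ffill X (D1 @ [FF (Bang A)] @ Phi @ D2)) C"
| F_BangR: "derivF [FF (Bang A)] B \<Longrightarrow> derivF [FF (Bang A)] (Bang B)"
| F_BangC: "derivF (ffill X ([FF (Bang A)] @ G1 @ [FBr ([FF (Bang A)] @ G2)] @ G3)) C \<Longrightarrow>
    derivF (ffill X ([FF (Bang A)] @ G1 @ [FBr [FBr G2]] @ G3)) C"
| F_cut: "derivF Pi A \<Longrightarrow> derivF (ffill X (G1 @ [FF A] @ G2)) C \<Longrightarrow>
    derivF (ffill X (G1 @ Pi @ G2)) C"

fun tr_tt :: "tt \<Rightarrow> ftt" and tr :: "mf \<Rightarrow> ftt list" where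
  "tr_tt (F A) = FF A"
| "tr_tt (Br m) = FBr (tr m)"
| "tr (MF z G) = map tr_tt G"

end

theory Submission
  imports Defs
begin

text \<open>Read a meta-formula of \<open>M\<^sub>2\<^sub>0\<^sub>1\<^sub>8\<close> as a structure of \<open>F\<^sub>2\<^sub>0\<^sub>1\<^sub>8\<close> by writing the stoup of
  every bracket level as a block of banged formulae at the front of that level, where the
  contraction rule \<open>!C\<close> of \<open>F\<^sub>2\<^sub>0\<^sub>1\<^sub>8\<close> expects them. Since \<open>!P\<^sub>1\<close> and \<open>!P\<^sub>2\<close> let banged
  formulae travel freely within a level, such blocks can be permuted, merged and moved, so every
  rule of \<open>M\<^sub>2\<^sub>0\<^sub>1\<^sub>8\<close> becomes derivable in \<open>F\<^sub>2\<^sub>0\<^sub>1\<^sub>8\<close> under this reading: its \<open>!L\<close> becomes a permutation,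
  its \<open>!P\<close> becomes \<open>!L\<close> followed by a permutation.\<close>

abbreviation bangs :: "form list \<Rightarrow> ftt list" where
  "bangs L \<equiv> map (\<lambda>A. FF (Bang A)) L"

lemma derivF_bangs_move_left:
  "derivF (ffill X (D1 @ Phi @ bangs L @ D2)) C \<Longrightarrow>
   derivF (ffill X (D1 @ bangs L @ Phi @ D2)) C"
proof (induction L arbitrary: D1)
  case Nil
  then show ?case by simp
next
  case (Cons A L)
  have "derivF (ffill X ((D1 @ Phi) @ bangs L @ [FF (Bang A)] @ D2)) C"
    using F_BangP1[of X "D1 @ Phi" A "bangs L" D2 C] Cons.prems by simp
  then have "derivF (ffill X (D1 @ [FF (Bang A)] @ Phi @ bangs L @ D2)) C"
    using F_BangP2[of X D1 "Phi @ bangs L" A D2 C] by simp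
  then show ?case
    using Cons.IH[of "D1 @ [FF (Bang A)]"] by simp
qed

lemma derivF_bangs_move_right:
  "derivF (ffill X (D1 @ bangs L @ Phi @ D2)) C \<Longrightarrow>
   derivF (ffill X (D1 @ Phi @ bangs L @ D2)) C"
proof (induction L arbitrary: D1)
  case Nil
  then show ?case by simp
next
  case (Cons A L)
  have "derivF (ffill X (D1 @ [FF (Bang A)] @ Phi @ bangs L @ D2)) C"
    using Cons.IH[of "D1 @ [FF (Bang A)]"] Cons.prems by simp
  then have "derivF (ffill X (D1 @ Phi @ [FF (Bang A)] @ bangs L @ D2)) C"
    using F_BangP1[of X D1 A Phi "bangs L @ D2" C] by simp
  then show ?case
    using F_BangP2[of X "D1 @ Phi" "bangs L" A D2 C] by simp
qed

lemma derivF_bangs_perm: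
  assumes "derivF (ffill X (D1 @ bangs L @ D2)) C" and "mset L = mset L'"
  shows "derivF (ffill X (D1 @ bangs L' @ D2)) C"
  using assms
proof (induction L' arbitrary: D1 L)
  case Nil
  then show ?case by simp
next
  case (Cons A L')
  then have "A \<in> set L" by (metis list.set_intros(1) set_mset_mset)
  then obtain P S where L: "L = P @ A # S" by (meson split_list)
  with Cons.prems(1) have "derivF (ffill X (D1 @ bangs P @ bangs [A] @ bangs S @ D2)) C"
    by simp
  then have "derivF (ffill X ((D1 @ [FF (Bang A)]) @ bangs (P @ S) @ D2)) C"
    using derivF_bangs_move_left[of X D1 "bangs P" "[A]"] by simp
  moreover have "mset (P @ S) = mset L'" using Cons.prems(2) L by simp
  ultimately show ?case
    using Cons.IH by fastforce
qed

lemma derivF_bangs_merge: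
  assumes "derivF (ffill X (D1 @ bangs L2 @ Phi @ bangs L1 @ D2)) C"
    and "mset L = mset L1 + mset L2"
  shows "derivF (ffill X (D1 @ bangs L @ Phi @ D2)) C"
proof -
  have "derivF (ffill X (D1 @ bangs L1 @ bangs L2 @ Phi @ D2)) C"
    using derivF_bangs_move_left[of X D1 "bangs L2 @ Phi" L1 D2] assms(1) by simp
  then have "derivF (ffill X (D1 @ bangs (L1 @ L2) @ Phi @ D2)) C" by simp
  then show ?thesis
    by (rule derivF_bangs_perm) (simp add: assms(2) add.commute)
qed

text \<open>Any enumeration of the stoup will do, since by \<open>derivF_bangs_perm\<close> the
  order of the banged block is immaterial.\<close>

definition stoup_list :: "form multiset \<Rightarrow> form list" where
  "stoup_list z = (SOME L. mset L = z)"

lemma mset_stoup_list [simp]: "mset (stoup_list z) = z"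
  unfolding stoup_list_def by (rule someI_ex) (rule ex_mset)

lemma stoup_list_empty [simp]: "stoup_list {#} = []"
  by (rule mset_zero_iff[THEN iffD1]) simp

lemma stoup_list_single [simp]: "stoup_list {#A#} = [A]"
  by (rule mset_single_iff[THEN iffD1]) simp

lemma derivF_stoup_list_add:
  "derivF (ffill X (D1 @ bangs (stoup_list (z + {#A#})) @ D2)) C \<longleftrightarrow>
   derivF (ffill X (D1 @ bangs (A # stoup_list z) @ D2)) C"
  using derivF_bangs_perm[of X D1 "stoup_list (z + {#A#})" D2 C "A # stoup_list z"]
    derivF_bangs_perm[of X D1 "A # stoup_list z" D2 C "stoup_list (z + {#A#})"]
  by auto

fun unstoup_tt :: "tt \<Rightarrow> ftt" and unstoup :: "mf \<Rightarrow> ftt list" where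
  "unstoup_tt (F A) = FF A"
| "unstoup_tt (Br m) = FBr (unstoup m)"
| "unstoup (MF z G) = bangs (stoup_list z) @ map unstoup_tt G"

fun unstoup_ctx :: "ctx \<Rightarrow> fctx" where
  "unstoup_ctx Hole = FHole"
| "unstoup_ctx (CBr z G1 c G2) =
     FCBr (bangs (stoup_list z) @ map unstoup_tt G1) (unstoup_ctx c) (map unstoup_tt G2)"

lemma unstoup_fill [simp]: "unstoup (fill X T) = ffill (unstoup_ctx X) (unstoup T)"
  by (induction X) auto

lemma unstoup_stoupfree:
  "stoupfree_tt t \<Longrightarrow> unstoup_tt t = tr_tt t" "stoupfree m \<Longrightarrow> unstoup m = tr m"
  by (induction t and m) auto

lemma derivF_unstoup_OverL:
  assumes "derivF (unstoup (MF z1 G)) B"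
    and "derivF (unstoup (fill X (MF z2 (D1 @ [F C] @ D2)))) D"
  shows "derivF (unstoup (fill X (MF (z1 + z2) (D1 @ [F (Over C B)] @ G @ D2)))) D"
proof -
  let ?X = "unstoup_ctx X" and ?u = "map unstoup_tt"
  have "derivF (ffill ?X ((bangs (stoup_list z2) @ ?u D1) @ [FF (Over C B)] @
      (bangs (stoup_list z1) @ ?u G) @ ?u D2)) D"
    by (rule F_OverL) (use assms in simp_all)
  then show ?thesis
    using derivF_bangs_merge[of ?X "[]" "stoup_list z2" "?u D1 @ [FF (Over C B)]"
        "stoup_list z1" "?u G @ ?u D2" D "stoup_list (z1 + z2)"]
    by simp
qed

lemma derivF_unstoup_UnderL:
  assumes "derivF (unstoup (MF z1 G)) A"
    and "derivF (unstoup (fill X (MF z2 (D1 @ [F C] @ D2)))) D"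
  shows "derivF (unstoup (fill X (MF (z1 + z2) (D1 @ G @ [F (Under A C)] @ D2)))) D"
proof -
  let ?X = "unstoup_ctx X" and ?u = "map unstoup_tt"
  have "derivF (ffill ?X ((bangs (stoup_list z2) @ ?u D1) @
      (bangs (stoup_list z1) @ ?u G) @ [FF (Under A C)] @ ?u D2)) D"
    by (rule F_UnderL) (use assms in simp_all)
  then show ?thesis
    using derivF_bangs_merge[of ?X "[]" "stoup_list z2" "?u D1"
        "stoup_list z1" "?u G @ [FF (Under A C)] @ ?u D2" D "stoup_list (z1 + z2)"]
    by simp
qed

lemma derivF_unstoup_UnderR:
  assumes "derivF (unstoup (MF z ([F A] @ G))) C"
  shows "derivF (unstoup (MF z G)) (Under A C)"
proof -
  have "derivF ([FF A] @ bangs (stoup_list z) @ map unstoup_tt G) C"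
    using assms derivF_bangs_move_right[of FHole "[]" "stoup_list z" "[FF A]"] by simp
  then show ?thesis by (simp add: F_UnderR)
qed

lemma derivF_unstoup_ProdR:
  assumes "derivF (unstoup (MF z1 D)) A" and "derivF (unstoup (MF z2 G)) B"
  shows "derivF (unstoup (MF (z1 + z2) (D @ G))) (Prod A B)"
proof -
  let ?u = "map unstoup_tt"
  have "derivF ((bangs (stoup_list z1) @ ?u D) @ (bangs (stoup_list z2) @ ?u G)) (Prod A B)"
    by (rule F_ProdR) (use assms in simp_all)
  then show ?thesis
    using derivF_bangs_merge[of FHole "[]" "stoup_list z1" "?u D"
        "stoup_list z2" "?u G" "Prod A B" "stoup_list (z1 + z2)"]
    by (simp add: add.commute)
qed

lemma derivF_unstoup_BangL:
  assumes "derivF (unstoup (fill X (MF (z + {#A#}) (G1 @ G2)))) B"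
  shows "derivF (unstoup (fill X (MF z (G1 @ [F (Bang A)] @ G2)))) B"
proof -
  let ?X = "unstoup_ctx X" and ?u = "map unstoup_tt"
  have "derivF (ffill ?X ([] @ bangs [A] @ (bangs (stoup_list z) @ ?u G1) @ ?u G2)) B"
    using assms derivF_stoup_list_add[of ?X "[]"] by simp
  then show ?thesis
    using derivF_bangs_move_right[of ?X "[]" "[A]" "bangs (stoup_list z) @ ?u G1"] by simp
qed

lemma derivF_unstoup_BangP:
  assumes "derivF (unstoup (fill X (MF z (G1 @ [F A] @ G2)))) B"
  shows "derivF (unstoup (fill X (MF (z + {#A#}) (G1 @ G2)))) B"
proof -
  let ?X = "unstoup_ctx X" and ?u = "map unstoup_tt"
  have "derivF (ffill ?X ([] @ (bangs (stoup_list z) @ ?u G1) @ bangs [A] @ ?u G2)) B"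
    using assms F_BangL[of ?X "bangs (stoup_list z) @ ?u G1" A "?u G2" B] by simp
  then show ?thesis
    using derivF_bangs_move_left[of ?X "[]" "bangs (stoup_list z) @ ?u G1" "[A]"]
      derivF_stoup_list_add[of ?X "[]"]
    by simp
qed

lemma derivF_unstoup_BangC:
  assumes "derivF (unstoup (fill X (MF (z + {#A#}) (G1 @ [Br (MF {#A#} G2)] @ G3)))) B"
  shows "derivF (unstoup (fill X (MF (z + {#A#}) (G1 @ [Br (MF {#} [Br (MF {#} G2)])] @ G3)))) B"
proof -
  let ?X = "unstoup_ctx X" and ?u = "map unstoup_tt"
  have "derivF (ffill ?X ([FF (Bang A)] @ (bangs (stoup_list z) @ ?u G1) @
      [FBr ([FF (Bang A)] @ ?u G2)] @ ?u G3)) B"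
    using assms derivF_stoup_list_add[of ?X "[]"] by simp
  then have "derivF (ffill ?X ([FF (Bang A)] @ (bangs (stoup_list z) @ ?u G1) @
      [FBr [FBr (?u G2)]] @ ?u G3)) B"
    by (rule F_BangC)
  then show ?thesis
    using derivF_stoup_list_add[of ?X "[]"] by simp
qed

lemma derivM_imp_derivF_unstoup: "derivM Xi C \<Longrightarrow> derivF (unstoup Xi) C"
proof (induction rule: derivM.induct)
  case (M_ax A)
  show ?case using F_ax by simp
next
  case M_one
  show ?case using F_one by simp
next
  case (M_OverL z1 G B X z2 D1 C D2 D)
  show ?case by (rule derivF_unstoup_OverL[OF M_OverL.IH])
next
  case (M_OverR z G B C)
  then show ?case using F_OverR by simp
next
  case (M_UnderL z1 G A X z2 D1 C D2 D)
  show ?case by (rule derivF_unstoup_UnderL[OF M_UnderL.IH])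
next
  case (M_UnderR z A G C)
  show ?case by (rule derivF_unstoup_UnderR[OF M_UnderR.IH])
next
  case (M_ProdL X z D1 A B D2 D)
  then show ?case
    using F_ProdL[of "unstoup_ctx X" "bangs (stoup_list z) @ map unstoup_tt D1"] by simp
next
  case (M_ProdR z1 D A z2 G B)
  show ?case by (rule derivF_unstoup_ProdR[OF M_ProdR.IH])
next
  case (M_OneL X z D1 D2 A)
  then show ?case
    using F_OneL[of "unstoup_ctx X" "bangs (stoup_list z) @ map unstoup_tt D1"] by simp
next
  case (M_PlusL X z D1 A1 D2 C A2)
  then show ?case
    using F_PlusL[of "unstoup_ctx X" "bangs (stoup_list z) @ map unstoup_tt D1"] by simp
next
  case (M_PlusR1 Xi A1 A2)
  show ?case by (rule F_PlusR1[OF M_PlusR1.IH])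
next
  case (M_PlusR2 Xi A2 A1)
  show ?case by (rule F_PlusR2[OF M_PlusR2.IH])
next
  case (M_WithL1 X z D1 A1 D2 C A2)
  then show ?case
    using F_WithL1[of "unstoup_ctx X" "bangs (stoup_list z) @ map unstoup_tt D1"] by simp
next
  case (M_WithL2 X z D1 A2 D2 C A1)
  then show ?case
    using F_WithL2[of "unstoup_ctx X" "bangs (stoup_list z) @ map unstoup_tt D1"] by simp
next
  case (M_WithR Xi A1 A2)
  show ?case by (rule F_WithR[OF M_WithR.IH])
next
  case (M_BoxInvL X z D1 A D2 B)
  then show ?case
    using F_BoxInvL[of "unstoup_ctx X" "bangs (stoup_list z) @ map unstoup_tt D1"] by simp
next
  case (M_BoxInvR Xi A)
  then show ?case using F_BoxInvR by simp
next
  case (M_DiamL X z D1 A D2 B)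
  then show ?case
    using F_DiamL[of "unstoup_ctx X" "bangs (stoup_list z) @ map unstoup_tt D1"] by simp
next
  case (M_DiamR Xi A)
  then show ?case using F_DiamR by simp
next
  case (M_BangL X z A G1 G2 B)
  show ?case by (rule derivF_unstoup_BangL[OF M_BangL.IH])
next
  case (M_BangP X z G1 A G2 B)
  show ?case by (rule derivF_unstoup_BangP[OF M_BangP.IH])
next
  case (M_BangR A B)
  then show ?case using F_BangR by simp
next
  case (M_BangC X z A G1 G2 G3 B)
  show ?case by (rule derivF_unstoup_BangC[OF M_BangC.IH])
qed

theorem proposition3:
  assumes "stoupfree Xi" and "derivM Xi C"
  shows "derivF (tr Xi) C"
  using derivM_imp_derivF_unstoup[OF assms(2)] unstoup_stoupfree(2)[OF assms(1)] by simp

end
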